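(* There exists an absolute constant $C_1>1$ such that the following holds. Let $\mu$ be a centered log-concave probability measure on $\mathbb{R}^n$, let $t\geq 1$ and $\delta\in(0,1)$. Then for every $x\in\delta Z_t^+(\mu)$, $$\varphi_\mu(x)\geq \frac{(1-\delta^t)^2}{C_1^t}.$$
   Context: A log-concave probability measure on $\mathbb{R}^n$ is a Borel probability measure with $\mu(\lambda A+(1-\lambda)B)\geq\mu(A)^\lambda\mu(B)^{1-\lambda}$ for compact $A,B$, $\lambda\in(0,1)$, and $\mu(H)<1$ for every hyperplane $H$; it has density $f_\mu$. Centered means barycenter at $0$. $Z_t^+(\mu)$ is the convex body with support function $h_{Z_t^+(\mu)}(y)=\left(\int\langle x,y\rangle_+^t f_\mu(x)\,dx\right)^{1/t}$, $a_+=\max\{a,0\}$. $\varphi_\mu(x)=\inf\{\mu(H):H$ a half-space containing $x\}$. *)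

theory Defs
  imports "HOL-Probability.Probability"
begin

text \<open>R^n is represented inside nat => real (product topology) as the coordinate
  subspace of functions vanishing from index n on; this lets the dimension n be
  quantified after the absolute constant.\<close>

definition Rn :: "nat \<Rightarrow> (nat \<Rightarrow> real) set" where
  "Rn n = {x. \<forall>i\<ge>n. x i = 0}"

definition ip :: "nat \<Rightarrow> (nat \<Rightarrow> real) \<Rightarrow> (nat \<Rightarrow> real) \<Rightarrow> real" where
  "ip n x y = (\<Sum>i<n. x i * y i)"

definition log_concave :: "nat \<Rightarrow> (nat \<Rightarrow> real) measure \<Rightarrow> bool" where
  "log_concave n M \<longleftrightarrow>
     prob_space M \<and> sets M = sets borel \<and> measure M (Rn n) = 1 \<and>
     (\<forall>A B lam. A \<subseteq> Rn n \<and> B \<subseteq> Rn n \<and> compact A \<and> compact B \<and> 0 < lam \<and> lam < 1 \<longrightarrow>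
        measure M {(\<lambda>i. lam * a i + (1 - lam) * b i) | a b. a \<in> A \<and> b \<in> B}
          \<ge> measure M A powr lam * measure M B powr (1 - lam)) \<and>
     (\<forall>u c. u \<in> Rn n \<and> (\<exists>i<n. u i \<noteq> 0) \<longrightarrow> measure M {z \<in> Rn n. ip n u z = c} < 1)"

definition centered :: "nat \<Rightarrow> (nat \<Rightarrow> real) measure \<Rightarrow> bool" where
  "centered n M \<longleftrightarrow> (\<forall>i<n. integrable M (\<lambda>x. x i) \<and> (\<integral>x. x i \<partial>M) = 0)"

definition support_Zplus :: "nat \<Rightarrow> (nat \<Rightarrow> real) measure \<Rightarrow> real \<Rightarrow> (nat \<Rightarrow> real) \<Rightarrow> real" where
  "support_Zplus n M t y = (\<integral>x. (max (ip n x y) 0) powr t \<partial>M) powr (1 / t)"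

definition Zplus :: "nat \<Rightarrow> (nat \<Rightarrow> real) measure \<Rightarrow> real \<Rightarrow> (nat \<Rightarrow> real) set" where
  "Zplus n M t = {z \<in> Rn n. \<forall>y\<in>Rn n. ip n z y \<le> support_Zplus n M t y}"

definition halfspace :: "nat \<Rightarrow> (nat \<Rightarrow> real) set \<Rightarrow> bool" where
  "halfspace n H \<longleftrightarrow> (\<exists>u c. u \<in> Rn n \<and> (\<exists>i<n. u i \<noteq> 0) \<and> H = {z \<in> Rn n. ip n u z \<le> c})"

definition phi :: "nat \<Rightarrow> (nat \<Rightarrow> real) measure \<Rightarrow> (nat \<Rightarrow> real) \<Rightarrow> real" where
  "phi n M x = Inf {measure M H | H. halfspace n H \<and> x \<in> H}"

end

theory Submission
  imports Defs
begin

(* Fix a half-space H = {w. <u, w> <= c} containing x = delta z with z in Z_t^+(mu), and let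
   X = <w, -u>. Then H contains {X >= delta h}, where h = h_{Z_t^+(mu)}(-u) satisfies
   h^t = E X_+^t, so it suffices to bound the tail G(s) = P(X >= s) at s = delta h.
   Brunn-Minkowski makes G log-concave, hence G(k s) <= G(0) (G(s)/G(0))^k; together with
   E X = 0 this yields a Gruenbaum-type bound G(0) >= 1/10. If G(delta h) < G(0) e^(-t), the
   geometric decay bounds E X_+^t by (delta h)^t (1 + 3 2^t G(delta h)), which forces
   G(delta h) >= (1 - delta^t) / (3 2^t). Either way G(delta h) >= (1 - delta^t) / (10 e^t),
   which is stronger than the claim with C1 = 10 e. *)

lemma exists_halving_crossing:
  fixes a\<^sub>0 \<epsilon> :: real
  assumes "0 < a\<^sub>0" "P a\<^sub>0" and small: "0 < \<epsilon>" "\<And>a. 0 < a \<Longrightarrow> a < \<epsilon> \<Longrightarrow> \<not> P a"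
  obtains a where "0 < a" "P a" "\<not> P (a / 2)"
proof (rule ccontr)
  assume "\<not> thesis"
  then have step: "0 < a \<Longrightarrow> P a \<Longrightarrow> P (a / 2)" for a using that by blast
  have all: "P (a\<^sub>0 * (1 / 2) ^ k)" for k
    by (induction k) (use assms step in \<open>simp_all add: mult.assoc\<close>)
  obtain k where "(1 / 2) ^ k < \<epsilon> / a\<^sub>0"
    using real_arch_pow_inv[of "\<epsilon> / a\<^sub>0" "1 / 2"] assms by auto
  then have "a\<^sub>0 * (1 / 2) ^ k < \<epsilon>" using assms by (simp add: field_simps)
  with all[of k] small assms show False by simp
qed

lemma pos_part_powr_le_layer_sum:
  fixes y s t :: real assumes s: "0 < s" and t: "0 < t"
  shows "ennreal (max y 0 powr t)
    \<le> (\<Sum>k. ennreal (((real k + 1) powr t - real k powr t) * s powr t) * indicator {real k * s..} y)"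
    (is "_ \<le> (\<Sum>k. ?f k)")
proof (cases "y < 0")
  case False
  define K where "K = nat \<lfloor>y / s\<rfloor>"
  have "real K = of_int \<lfloor>y / s\<rfloor>" using False s by (simp add: K_def)
  moreover have "of_int \<lfloor>y / s\<rfloor> \<le> y / s" "y / s < of_int \<lfloor>y / s\<rfloor> + 1"
    by linarith+
  ultimately have K: "real K * s \<le> y" "y < (real K + 1) * s"
    unfolding pos_le_divide_eq[OF s] pos_divide_less_eq[OF s] by simp_all
  have incr: "real k powr t \<le> (real k + 1) powr t" for k
    using t by (intro powr_mono2) auto
  have "max y 0 powr t \<le> ((real K + 1) * s) powr t"
    using False K t by (intro powr_mono2) auto
  also have "\<dots> = (\<Sum>k<Suc K. ((real k + 1) powr t - real k powr t) * s powr t)"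
    using sum_lessThan_telescope[of "\<lambda>k. real k powr t" "Suc K"] s t
    by (simp add: sum_distrib_right[symmetric] powr_mult add.commute)
  finally have "ennreal (max y 0 powr t)
      \<le> ennreal (\<Sum>k<Suc K. ((real k + 1) powr t - real k powr t) * s powr t)"
    by (rule ennreal_leI)
  also have "\<dots> = (\<Sum>k<Suc K. ?f k)"
  proof -
    have "real k * s \<le> y" if "k < Suc K" for k
      using that s K(1) order_trans[OF mult_right_mono[of "real k" "real K" s]] by simp
    then show ?thesis
      using incr by (subst sum_ennreal[symmetric]) (auto intro!: sum.cong)
  qed
  also have "\<dots> \<le> (\<Sum>k. ?f k)"
    by (rule sum_le_suminf) auto
  finally show ?thesis .
qed simp

lemma suminf_ennreal_geometric:
  fixes c r :: real assumes "0 \<le> c" "0 \<le> r" "r < 1"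
  shows "(\<Sum>k. ennreal (c * r ^ k)) = ennreal (c / (1 - r))"
proof (rule suminf_ennreal_eq)
  show "(\<lambda>k. c * r ^ k) sums (c / (1 - r))"
    using sums_mult[OF geometric_sums[of r] , of c] assms by simp
qed (use assms in simp)

lemma plus_two_powr_exp_decay_le:
  assumes t: "1 \<le> t"
  shows "(real k + 2) powr t * exp (- t * real k) \<le> 2 powr t * exp (- 1 / 2) ^ k"
proof -
  have "1 + real k / 2 \<le> exp (real k / 2)" by (rule exp_ge_add_one_self)
  then have "(real k + 2) * exp (- real k) \<le> 2 * exp (real k / 2) * exp (- real k)"
    by (intro mult_right_mono) (linarith, simp)
  also have "\<dots> = 2 * exp (- real k / 2)" by (simp add: mult.assoc flip: exp_add)
  finally have base: "(real k + 2) * exp (- real k) \<le> 2 * exp (- real k / 2)" .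
  have exp_powr: "exp x powr t = exp (t * x)" for x by (simp add: powr_def)
  have "(real k + 2) powr t * exp (- t * real k) = ((real k + 2) * exp (- real k)) powr t"
    by (simp add: powr_mult exp_powr)
  also have "\<dots> \<le> (2 * exp (- real k / 2)) powr t"
    using base t by (intro powr_mono2) auto
  also have "\<dots> = 2 powr t * exp (- t * real k / 2)"
    by (simp add: powr_mult exp_powr)
  also have "\<dots> \<le> 2 powr t * exp (- real k / 2)"
    using mult_right_mono[OF t, of "real k"] by (intro mult_left_mono) auto
  also have "exp (- real k / 2) = exp (- 1 / 2) ^ k"
    by (simp add: exp_of_nat_mult[symmetric])
  finally show ?thesis .
qed

section \<open>Log-concave functions on the line\<close>

definition log_concave_fun :: "(real \<Rightarrow> real) \<Rightarrow> bool" where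
  "log_concave_fun G \<longleftrightarrow>
     (\<forall>a b l. 0 < l \<longrightarrow> l < 1 \<longrightarrow> G a powr l * G b powr (1 - l) \<le> G (l * a + (1 - l) * b))"

lemma log_concave_funD_ln:
  assumes G: "log_concave_fun G" and l: "0 < l" "l \<le> 1" and pos: "0 < G a" "0 < G b"
  shows "0 < G (l * a + (1 - l) * b)"
    and "l * ln (G a) + (1 - l) * ln (G b) \<le> ln (G (l * a + (1 - l) * b))"
proof -
  have le: "G a powr l * G b powr (1 - l) \<le> G (l * a + (1 - l) * b)"
    using G l pos unfolding log_concave_fun_def by (cases "l = 1") auto
  moreover have prod_pos: "0 < G a powr l * G b powr (1 - l)" using pos by simp
  ultimately have comb_pos: "0 < G (l * a + (1 - l) * b)" by linarith
  then show "0 < G (l * a + (1 - l) * b)" .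
  have "ln (G a powr l * G b powr (1 - l)) \<le> ln (G (l * a + (1 - l) * b))"
    using le prod_pos comb_pos by simp
  moreover have "ln (G a powr l * G b powr (1 - l)) = l * ln (G a) + (1 - l) * ln (G b)"
    using pos by (simp add: ln_mult)
  ultimately show "l * ln (G a) + (1 - l) * ln (G b) \<le> ln (G (l * a + (1 - l) * b))"
    by simp
qed

lemma log_concave_fun_geometric_decay:
  assumes G: "log_concave_fun G" and nonneg: "\<And>s. 0 \<le> G s" and G0: "0 < G 0"
  shows "G (real k * a) \<le> G 0 * (G a / G 0) ^ k"
proof (cases "k = 0 \<or> G (real k * a) \<le> 0")
  case False
  then have k: "1 \<le> real k" and pos: "0 < G (real k * a)" by auto
  let ?l = "1 / real k"
  have comb: "?l * (real k * a) + (1 - ?l) * 0 = a" using k by simp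
  have "0 < G a"
    and ln_le: "?l * ln (G (real k * a)) + (1 - ?l) * ln (G 0) \<le> ln (G a)"
    using log_concave_funD_ln[OF G _ _ pos G0, of ?l] k unfolding comb by auto
  from ln_le k have "ln (G (real k * a)) \<le> ln (G 0) + real k * (ln (G a) - ln (G 0))"
    by (simp add: field_simps)
  also have "\<dots> = ln (G 0 * (G a / G 0) ^ k)"
    using G0 \<open>0 < G a\<close> by (simp add: ln_mult ln_div ln_realpow)
  finally show ?thesis
    using pos G0 \<open>0 < G a\<close> by simp
qed (use G0 nonneg[of a] in \<open>auto intro: order_trans[of _ 0]\<close>)

lemma log_concave_fun_left_bound:
  assumes G: "log_concave_fun G" and G0: "0 < G 0" and a: "0 < a" and b: "0 < b"
    and Ga: "G 0 * exp (-1) \<le> G a"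
  shows "G (- b) \<le> G 0 * exp (b / a)"
proof (cases "G (- b) \<le> 0")
  case False
  let ?l = "a / (a + b)"
  have l: "0 < ?l" "?l \<le> 1" "1 - ?l = b / (a + b)" "?l * (- b) + (1 - ?l) * a = 0"
    using a b by (auto simp: field_simps)
  have "0 < G 0 * exp (-1)" using G0 by simp
  with Ga have "ln (G 0 * exp (-1)) \<le> ln (G a)" "0 < G a" by auto
  then have lnGa: "ln (G 0) - 1 \<le> ln (G a)" using G0 by (simp add: ln_mult)
  have "0 < G (- b)" using False by simp
  then have "?l * ln (G (- b)) + (1 - ?l) * ln (G a) \<le> ln (G 0)"
    by (rule log_concave_funD_ln(2)[OF G l(1,2) _ \<open>0 < G a\<close>, of "- b", unfolded l(4)])
  then have "(a + b) * (?l * ln (G (- b)) + (1 - ?l) * ln (G a)) \<le> (a + b) * ln (G 0)"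
    using a b by (intro mult_left_mono) auto
  then have "a * ln (G (- b)) + b * ln (G a) \<le> (a + b) * ln (G 0)"
    using a b l(3) by (simp add: distrib_left)
  moreover have "b * (ln (G 0) - 1) \<le> b * ln (G a)"
    using b lnGa by (intro mult_left_mono) auto
  ultimately have "ln (G (- b)) \<le> ln (G 0) + b / a"
    using a by (simp add: field_simps)
  then have "exp (ln (G (- b))) \<le> exp (ln (G 0) + b / a)" by simp
  then show ?thesis
    using False G0 by (simp add: exp_add)
next
  case True
  moreover have "0 < G 0 * exp (b / a)" using G0 by simp
  ultimately show ?thesis by linarith
qed

section \<open>Tails of a centred random variable\<close>

definition tail :: "'a measure \<Rightarrow> ('a \<Rightarrow> real) \<Rightarrow> real \<Rightarrow> real" where
  "tail M X s = measure M {x \<in> space M. s \<le> X x}"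

locale centered_log_concave_tail = prob_space M for M :: "'a measure" +
  fixes X :: "'a \<Rightarrow> real"
  assumes integrable_X: "integrable M X"
    and expectation_X: "expectation X = 0"
    and log_concave_tail: "log_concave_fun (tail M X)"
    and not_AE_zero: "\<not> (AE x in M. X x = 0)"
begin

lemma borel_measurable_X [measurable]: "X \<in> borel_measurable M"
  using integrable_X by auto

lemma tail_nonneg: "0 \<le> tail M X s"
  by (simp add: tail_def)

lemma tail_antimono: "s \<le> s' \<Longrightarrow> tail M X s' \<le> tail M X s"
  unfolding tail_def by (rule finite_measure_mono) auto

lemma emeasure_tail: "emeasure M {x \<in> space M. s \<le> X x} = ennreal (tail M X s)"
  by (simp add: tail_def emeasure_eq_measure)

definition pos_mean :: real where
  "pos_mean = expectation (\<lambda>x. max (X x) 0)"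

lemma integrable_pos_part: "integrable M (\<lambda>x. max (X x) 0)"
  and integrable_neg_part: "integrable M (\<lambda>x. max (- X x) 0)"
  using integrable_X by auto

lemma neg_mean_eq_pos_mean: "expectation (\<lambda>x. max (- X x) 0) = pos_mean"
proof -
  have "expectation X = expectation (\<lambda>x. max (X x) 0 - max (- X x) 0)"
    by (rule Bochner_Integration.integral_cong) auto
  also have "\<dots> = pos_mean - expectation (\<lambda>x. max (- X x) 0)"
    unfolding pos_mean_def using integrable_pos_part integrable_neg_part by simp
  finally show ?thesis using expectation_X by simp
qed

lemma pos_mean_pos: "0 < pos_mean"
proof (rule ccontr)
  assume "\<not> 0 < pos_mean"
  moreover have "0 \<le> pos_mean" unfolding pos_mean_def by (rule integral_nonneg_AE) auto
  ultimately have "pos_mean = 0" by simp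
  then have "expectation (\<lambda>x. max (X x) 0 + max (- X x) 0) = 0"
    using neg_mean_eq_pos_mean integrable_pos_part integrable_neg_part by (simp add: pos_mean_def)
  then have "AE x in M. max (X x) 0 + max (- X x) 0 = 0"
    using integrable_pos_part integrable_neg_part by (subst (asm) integral_nonneg_eq_0_iff_AE) auto
  then have "AE x in M. X x = 0" by (rule eventually_mono) auto
  with not_AE_zero show False by simp
qed

lemma tail_markov:
  assumes "0 \<le> a" shows "a * tail M X a \<le> pos_mean"
proof -
  have "a * tail M X a = expectation (\<lambda>x. a * indicator {x \<in> space M. a \<le> X x} x)"
    by (simp add: tail_def)
  also have "\<dots> \<le> pos_mean"
    unfolding pos_mean_def using assms
    by (intro integral_mono integrable_pos_part integrable_mult_right integrable_real_indicator)
       (auto simp: indicator_def emeasure_eq_measure)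
  finally show ?thesis .
qed

lemma lower_tail_bound:
  assumes "0 < b" shows "b * (1 - tail M X (- b)) \<le> pos_mean"
proof -
  have "1 - tail M X (- b) = prob (space M - {x \<in> space M. - b \<le> X x})"
    by (simp add: tail_def prob_compl)
  also have "space M - {x \<in> space M. - b \<le> X x} = {x \<in> space M. X x < - b}" by auto
  finally have "b * (1 - tail M X (- b)) = expectation (\<lambda>x. b * indicator {x \<in> space M. X x < - b} x)"
    by simp
  also have "\<dots> \<le> expectation (\<lambda>x. max (- X x) 0)"
    using assms
    by (intro integral_mono integrable_neg_part integrable_mult_right integrable_real_indicator)
       (auto simp: indicator_def emeasure_eq_measure)
  finally show ?thesis by (simp add: neg_mean_eq_pos_mean)
qed

lemma nn_integral_pos_part_powr_le:
  assumes "0 < s" "0 < t"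
  shows "(\<integral>\<^sup>+x. ennreal (max (X x) 0 powr t) \<partial>M)
    \<le> (\<Sum>k. ennreal (((real k + 1) powr t - real k powr t) * s powr t * tail M X (real k * s)))"
proof -
  have "(\<integral>\<^sup>+x. ennreal (max (X x) 0 powr t) \<partial>M)
      \<le> (\<integral>\<^sup>+x. (\<Sum>k. ennreal (((real k + 1) powr t - real k powr t) * s powr t)
                         * indicator {real k * s..} (X x)) \<partial>M)"
    by (intro nn_integral_mono pos_part_powr_le_layer_sum assms)
  also have "\<dots> = (\<Sum>k. \<integral>\<^sup>+x. ennreal (((real k + 1) powr t - real k powr t) * s powr t)
                         * indicator {x \<in> space M. real k * s \<le> X x} x \<partial>M)"
    by (subst nn_integral_suminf) (auto intro!: suminf_cong nn_integral_cong simp: indicator_def)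
  also have "\<dots> = (\<Sum>k. ennreal (((real k + 1) powr t - real k powr t) * s powr t * tail M X (real k * s)))"
  proof (intro suminf_cong)
    fix k
    have "real k powr t \<le> (real k + 1) powr t" using assms by (intro powr_mono2) auto
    then show "(\<integral>\<^sup>+x. ennreal (((real k + 1) powr t - real k powr t) * s powr t)
                 * indicator {x \<in> space M. real k * s \<le> X x} x \<partial>M)
      = ennreal (((real k + 1) powr t - real k powr t) * s powr t * tail M X (real k * s))"
      by (simp add: nn_integral_cmult_indicator emeasure_tail ennreal_mult tail_nonneg)
  qed
  finally show ?thesis .
qed

lemma pos_mean_le_tail_sum:
  assumes "0 < a" shows "ennreal pos_mean \<le> (\<Sum>k. ennreal (a * tail M X (real k * a)))"
proof -
  have "ennreal pos_mean = (\<integral>\<^sup>+x. ennreal (max (X x) 0 powr 1) \<partial>M)"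
    unfolding pos_mean_def using integrable_pos_part
    by (subst nn_integral_eq_integral) auto
  also have "\<dots> \<le> (\<Sum>k. ennreal (a * tail M X (real k * a)))"
    using nn_integral_pos_part_powr_le[OF assms, of 1] assms by simp
  finally show ?thesis .
qed

lemma tail_zero_pos: "0 < tail M X 0"
proof (rule ccontr)
  assume "\<not> 0 < tail M X 0"
  then have "tail M X (real k * 1) = 0" for k
    using tail_antimono[of 0 "real k * 1"] tail_nonneg[of "real k * 1"] by simp
  then have "ennreal pos_mean \<le> 0"
    using pos_mean_le_tail_sum[of 1] by simp
  with pos_mean_pos show False by simp
qed

lemma tail_geometric_decay: "tail M X (real k * a) \<le> tail M X 0 * (tail M X a / tail M X 0) ^ k"
  using log_concave_fun_geometric_decay[OF log_concave_tail tail_nonneg tail_zero_pos] .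

lemma pos_mean_le_of_tail_drop:
  assumes a: "0 < a" and drop: "tail M X a \<le> tail M X 0 * exp (-1)"
  shows "pos_mean \<le> a * tail M X 0 / (1 - exp (-1))"
proof -
  let ?r = "tail M X a / tail M X 0"
  have r: "0 \<le> ?r" "?r \<le> exp (-1)"
    using tail_zero_pos tail_nonneg drop by (auto simp: divide_le_eq mult.commute)
  have "ennreal pos_mean \<le> (\<Sum>k. ennreal (a * tail M X (real k * a)))"
    by (rule pos_mean_le_tail_sum[OF a])
  also have "\<dots> \<le> (\<Sum>k. ennreal (a * tail M X 0 * exp (-1) ^ k))"
  proof (intro suminf_le ennreal_leI)
    fix k
    have "tail M X 0 * ?r ^ k \<le> tail M X 0 * exp (-1) ^ k"
      using tail_zero_pos r by (intro mult_left_mono power_mono) auto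
    then have "tail M X (real k * a) \<le> tail M X 0 * exp (-1) ^ k"
      using tail_geometric_decay[of k a] by linarith
    then show "a * tail M X (real k * a) \<le> a * tail M X 0 * exp (-1) ^ k"
      using a by (simp add: mult.assoc)
  qed auto
  also have "\<dots> = ennreal (a * tail M X 0 / (1 - exp (-1)))"
    using a tail_zero_pos by (intro suminf_ennreal_geometric) auto
  finally show ?thesis
    using a tail_zero_pos by (subst (asm) ennreal_le_iff) auto
qed

lemma obtain_tail_crossing:
  obtains a where "0 < a" "tail M X a < tail M X 0 * exp (-1)"
    "tail M X 0 * exp (-1) \<le> tail M X (a / 2)"
proof -
  let ?G0 = "tail M X 0"
  define c where "c = ?G0 * exp (-1)"
  have G0: "0 < ?G0" by (rule tail_zero_pos)
  have exp_m1: "exp (-1::real) < 1" by simp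
  define a\<^sub>0 where "a\<^sub>0 = 2 * exp 1 * pos_mean / ?G0"
  have a\<^sub>0: "0 < a\<^sub>0" using pos_mean_pos G0 by (simp add: a\<^sub>0_def)
  have "tail M X a\<^sub>0 \<le> pos_mean / a\<^sub>0"
    using tail_markov[of a\<^sub>0] a\<^sub>0 by (simp add: field_simps)
  also have "\<dots> < c"
    using pos_mean_pos G0 by (simp add: a\<^sub>0_def c_def exp_minus field_simps)
  finally have start: "tail M X a\<^sub>0 < c" .
  define \<epsilon> where "\<epsilon> = pos_mean * (1 - exp (-1)) / ?G0"
  have \<epsilon>: "0 < \<epsilon>" using pos_mean_pos G0 exp_m1 by (simp add: \<epsilon>_def)
  have below_\<epsilon>: "\<not> tail M X a < c" if "0 < a" "a < \<epsilon>" for a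
  proof
    assume "tail M X a < c"
    then have "pos_mean \<le> a * ?G0 / (1 - exp (-1))"
      using pos_mean_le_of_tail_drop[OF \<open>0 < a\<close>] by (simp add: c_def)
    also have "\<dots> < pos_mean"
      using that G0 exp_m1 by (simp add: \<epsilon>_def field_simps)
    finally show False by simp
  qed
  obtain a where "0 < a" "tail M X a < c" "\<not> tail M X (a / 2) < c"
    by (rule exists_halving_crossing[of a\<^sub>0 "\<lambda>a. tail M X a < c", OF a\<^sub>0 start \<epsilon> below_\<epsilon>])
  then show thesis by (intro that) (auto simp: c_def)
qed

(* At the crossing scale a, log-concavity to the left of 0 gives G(-b) <= 1/2 for
   b = (a/2) ln (1 / (2 G(0))), so E X_- >= b/2; this contradicts E X_+ <= 2 a G(0)
   once G(0) is small. *)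
lemma tail_zero_ge: "1 / 10 \<le> tail M X 0"
proof (rule ccontr)
  let ?G0 = "tail M X 0"
  assume "\<not> 1 / 10 \<le> ?G0"
  then have G0_small: "?G0 < 1 / 10" by simp
  have G0: "0 < ?G0" by (rule tail_zero_pos)
  obtain a where a: "0 < a" "tail M X a < ?G0 * exp (-1)" "?G0 * exp (-1) \<le> tail M X (a / 2)"
    by (rule obtain_tail_crossing)
  define L where "L = ln (1 / (2 * ?G0))"
  have "exp 1 * (2 * ?G0) \<le> 3 * (2 * ?G0)"
    using exp_le G0 by (intro mult_right_mono) auto
  then have "exp 1 * (2 * ?G0) < 1"
    using G0_small by linarith
  then have "exp 1 < 1 / (2 * ?G0)"
    using G0 by (simp add: pos_less_divide_eq)
  then have "ln (exp 1) < L"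
    unfolding L_def using G0 by (subst ln_less_cancel_iff) auto
  then have L: "1 < L" by simp
  define b where "b = a / 2 * L"
  have b: "0 < b" using a L by (simp add: b_def)
  have "tail M X (- b) \<le> ?G0 * exp (b / (a / 2))"
    using a by (intro log_concave_fun_left_bound[OF log_concave_tail G0 _ b]) auto
  also have "\<dots> = 1 / 2" using a G0 by (simp add: b_def L_def)
  finally have "b / 2 \<le> b * (1 - tail M X (- b))" using b by simp
  also have "\<dots> \<le> pos_mean" by (rule lower_tail_bound[OF b])
  also have "\<dots> \<le> a * ?G0 / (1 - exp (-1))"
    using pos_mean_le_of_tail_drop[OF a(1)] a(2) by simp
  also have "\<dots> \<le> 2 * a * ?G0"
  proof -
    have "2 \<le> exp (1::real)" using exp_ge_add_one_self[of 1] by simp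
    then have "exp (-1::real) \<le> 1 / 2" by (simp add: exp_minus field_simps)
    then show ?thesis using a G0 by (simp add: field_simps)
  qed
  finally have "a * L \<le> 8 * a * ?G0" by (simp add: b_def)
  then have "L \<le> 8 * ?G0" using a by simp
  with L G0_small show False by simp
qed

lemma tail_Suc_mult_le_of_tail_drop:
  assumes drop: "tail M X s \<le> tail M X 0 * exp (- t)"
  shows "tail M X (real (Suc k) * s) \<le> tail M X s * exp (- t * real k)"
proof -
  let ?q = "tail M X s"
  have ratio: "0 \<le> ?q / tail M X 0" "?q / tail M X 0 \<le> exp (- t)"
    using tail_zero_pos tail_nonneg drop by (auto simp: divide_le_eq mult.commute)
  have "tail M X (real (Suc k) * s) \<le> ?q * (?q / tail M X 0) ^ k"
    using tail_geometric_decay[of "Suc k" s] tail_zero_pos by simp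
  also have "\<dots> \<le> ?q * exp (- t) ^ k"
    using ratio tail_nonneg by (intro mult_left_mono power_mono) auto
  also have "exp (- t) ^ k = exp (- t * real k)"
    by (simp add: exp_of_nat_mult[symmetric] mult.commute)
  finally show ?thesis .
qed

lemma pos_moment_le_of_tail_drop:
  assumes s: "0 < s" and t: "1 \<le> t" and drop: "tail M X s \<le> tail M X 0 * exp (- t)"
  shows "(\<integral>\<^sup>+x. ennreal (max (X x) 0 powr t) \<partial>M) \<le> ennreal (s powr t * (1 + 3 * 2 powr t * tail M X s))"
proof -
  let ?q = "tail M X s"
  define f where "f k = ((real k + 1) powr t - real k powr t) * s powr t * tail M X (real k * s)" for k
  have q: "0 \<le> ?q" by (rule tail_nonneg)
  have f_Suc: "f (Suc k) \<le> 2 powr t * s powr t * ?q * exp (- 1 / 2) ^ k" for k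
  proof -
    have "f (Suc k) \<le> (real k + 2) powr t * s powr t * (?q * exp (- t * real k))"
      unfolding f_def using t tail_Suc_mult_le_of_tail_drop[OF drop, of k]
      by (intro mult_mono) (auto simp: add.commute add.left_commute tail_nonneg)
    also have "\<dots> = ((real k + 2) powr t * exp (- t * real k)) * (s powr t * ?q)"
      by (simp add: algebra_simps)
    also have "\<dots> \<le> (2 powr t * exp (- 1 / 2) ^ k) * (s powr t * ?q)"
      using plus_two_powr_exp_decay_le[OF t] q by (intro mult_right_mono) auto
    finally show ?thesis by (simp add: algebra_simps)
  qed
  have "exp (1 / 2 :: real) \<ge> 3 / 2" using exp_ge_add_one_self[of "1 / 2"] by simp
  then have exp_half: "exp (- 1 / 2 :: real) \<le> 2 / 3" by (simp add: exp_minus field_simps)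
  have "(\<integral>\<^sup>+x. ennreal (max (X x) 0 powr t) \<partial>M) \<le> (\<Sum>k. ennreal (f k))"
    unfolding f_def using s t by (intro nn_integral_pos_part_powr_le) auto
  also have "\<dots> = ennreal (f 0) + (\<Sum>k. ennreal (f (Suc k)))"
    using sums_Suc[OF summable_sums[OF summableI], of "\<lambda>k. ennreal (f k)"]
    by (simp add: sums_unique[symmetric] add.commute)
  also have "\<dots> \<le> ennreal (s powr t) + (\<Sum>k. ennreal (2 powr t * s powr t * ?q * exp (- 1 / 2) ^ k))"
    using t by (intro add_mono ennreal_leI suminf_le f_Suc) (auto simp: f_def tail_def mult_left_le)
  also have "\<dots> = ennreal (s powr t + 2 powr t * s powr t * ?q / (1 - exp (- 1 / 2)))"
    using q by (subst suminf_ennreal_geometric) (auto simp: ennreal_plus[symmetric] simp del: ennreal_plus)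
  also have "\<dots> \<le> ennreal (s powr t * (1 + 3 * 2 powr t * ?q))"
  proof (rule ennreal_leI)
    have "1 / (1 - exp (- 1 / 2 :: real)) \<le> 3" using exp_half by (simp add: field_simps)
    then have "2 powr t * s powr t * ?q * (1 / (1 - exp (- 1 / 2))) \<le> 2 powr t * s powr t * ?q * 3"
      using q by (intro mult_left_mono) auto
    then show "s powr t + 2 powr t * s powr t * ?q / (1 - exp (- 1 / 2)) \<le> s powr t * (1 + 3 * 2 powr t * ?q)"
      by (simp add: algebra_simps)
  qed
  finally show ?thesis .
qed

lemma one_sub_powr_le_of_tail_drop:
  assumes t: "1 \<le> t" and \<delta>: "0 < \<delta>" "\<delta> \<le> 1" and h: "0 < h"
    and moment: "ennreal (h powr t) \<le> (\<integral>\<^sup>+x. ennreal (max (X x) 0 powr t) \<partial>M)"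
    and drop: "tail M X (\<delta> * h) \<le> tail M X 0 * exp (- t)"
  shows "1 - \<delta> powr t \<le> 3 * 2 powr t * tail M X (\<delta> * h)"
proof -
  let ?q = "tail M X (\<delta> * h)"
  have "ennreal (h powr t) \<le> ennreal ((\<delta> * h) powr t * (1 + 3 * 2 powr t * ?q))"
    using moment pos_moment_le_of_tail_drop[OF _ t drop] \<delta> h by simp
  then have "h powr t * 1 \<le> h powr t * (\<delta> powr t * (1 + 3 * 2 powr t * ?q))"
    using \<delta> h tail_nonneg by (simp add: powr_mult mult_ac)
  then have "1 \<le> \<delta> powr t * (1 + 3 * 2 powr t * ?q)"
    using h by (subst (asm) mult_le_cancel_left_pos) auto
  also have "\<dots> \<le> \<delta> powr t + 3 * 2 powr t * ?q"
    using \<delta> t powr_mono2[of t \<delta> 1] tail_nonneg[of "\<delta> * h"]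
    by (simp add: distrib_left mult_left_le_one_le)
  finally show ?thesis by simp
qed

lemma tail_ge_of_pos_moment:
  assumes t: "1 \<le> t" and \<delta>: "0 \<le> \<delta>" "\<delta> \<le> 1" and h: "0 \<le> h"
    and moment: "ennreal (h powr t) \<le> (\<integral>\<^sup>+x. ennreal (max (X x) 0 powr t) \<partial>M)"
  shows "(1 - \<delta> powr t) / (10 * exp t) \<le> tail M X (\<delta> * h)"
proof (cases "tail M X 0 * exp (- t) \<le> tail M X (\<delta> * h)")
  case True
  have "(1 - \<delta> powr t) / (10 * exp t) \<le> 1 / 10 * exp (- t)"
    by (simp add: exp_minus field_simps)
  also have "\<dots> \<le> tail M X 0 * exp (- t)"
    using tail_zero_ge by (intro mult_right_mono) auto
  finally show ?thesis using True by linarith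
next
  case False
  have "tail M X 0 * exp (- t) \<le> tail M X 0 * 1"
    using t tail_nonneg by (intro mult_left_mono) auto
  with False have "\<delta> * h \<noteq> 0" by auto
  then have "1 - \<delta> powr t \<le> 3 * 2 powr t * tail M X (\<delta> * h)"
    using False \<delta> h by (intro one_sub_powr_le_of_tail_drop[OF t _ _ _ moment]) auto
  moreover have "t * ln 2 \<le> t" using ln_2_less_1 t by (intro mult_left_le) auto
  then have "2 powr t \<le> exp t" by (simp add: powr_def)
  then have "3 * 2 powr t \<le> 10 * exp t" using exp_gt_zero[of t] by linarith
  then have "3 * 2 powr t * tail M X (\<delta> * h) \<le> 10 * exp t * tail M X (\<delta> * h)"
    using tail_nonneg by (intro mult_right_mono) auto
  ultimately show ?thesis by (simp add: divide_le_eq mult.commute)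
qed

end

section \<open>Marginals of log-concave measures\<close>

lemma ip_commute: "ip n a b = ip n b a"
  by (simp add: ip_def mult.commute)

lemma ip_scale: "ip n u (\<lambda>i. c * z i) = c * ip n u z"
  by (simp add: ip_def sum_distrib_left mult_ac)

lemma ip_uminus: "ip n w (\<lambda>i. - u i) = - ip n u w"
  by (simp add: ip_def sum_negf mult.commute)

lemma ip_convex_comb:
  "ip n (\<lambda>i. l * a i + (1 - l) * b i) \<theta> = l * ip n a \<theta> + (1 - l) * ip n b \<theta>"
proof -
  have "ip n (\<lambda>i. l * a i + (1 - l) * b i) \<theta> = (\<Sum>i<n. l * (a i * \<theta> i) + (1 - l) * (b i * \<theta> i))"
    unfolding ip_def by (rule sum.cong) (simp_all add: algebra_simps)
  then show ?thesis by (simp add: ip_def sum.distrib sum_distrib_left)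
qed

lemma continuous_on_ip: "continuous_on UNIV (\<lambda>w. ip n w \<theta>)"
  unfolding ip_def by (intro continuous_intros continuous_on_product_coordinates)

lemma closed_Rn: "closed (Rn n)"
proof -
  have "Rn n = (\<Inter>i\<in>{n..}. {w. w i = 0})" by (auto simp: Rn_def)
  moreover have "closed (\<Inter>i\<in>{n..}. {w::nat \<Rightarrow> real. w i = 0})"
    by (intro closed_INT ballI closed_Collect_eq continuous_on_product_coordinates continuous_on_const)
  ultimately show ?thesis by simp
qed

definition cube :: "nat \<Rightarrow> nat \<Rightarrow> (nat \<Rightarrow> real) set" where
  "cube n k = PiE UNIV (\<lambda>i. if i < n then {- real k..real k} else {0})"

lemma mem_cube_iff: "w \<in> cube n k \<longleftrightarrow> w \<in> Rn n \<and> (\<forall>i<n. \<bar>w i\<bar> \<le> real k)"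
proof -
  have "w \<in> cube n k \<longleftrightarrow> (\<forall>i. w i \<in> (if i < n then {- real k..real k} else {0}))"
    by (simp add: cube_def PiE_iff)
  also have "\<dots> \<longleftrightarrow> (\<forall>i. if i < n then \<bar>w i\<bar> \<le> real k else w i = 0)"
    by (rule all_cong1) (auto simp: abs_le_iff)
  also have "\<dots> \<longleftrightarrow> w \<in> Rn n \<and> (\<forall>i<n. \<bar>w i\<bar> \<le> real k)"
    unfolding Rn_def by (auto simp: not_less)
  finally show ?thesis .
qed

lemma compact_cube: "compact (cube n k)"
proof -
  have "compactin (product_topology (\<lambda>i::nat. euclidean) UNIV) (cube n k)"
    unfolding cube_def by (subst compactin_PiE) auto
  then show ?thesis by (simp add: euclidean_product_topology)
qed

lemma cube_subset_Rn: "cube n k \<subseteq> Rn n"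
  by (auto simp: mem_cube_iff)

lemma incseq_cube: "incseq (cube n)"
proof (rule incseq_SucI, rule subsetI)
  fix k w assume w: "w \<in> cube n k"
  have "\<bar>w i\<bar> \<le> real (Suc k)" if "i < n" for i
  proof -
    from w that have "\<bar>w i\<bar> \<le> real k" by (simp add: mem_cube_iff)
    then show ?thesis by simp
  qed
  with w show "w \<in> cube n (Suc k)" by (simp add: mem_cube_iff)
qed

lemma Union_cube: "(\<Union>k. cube n k) = Rn n"
proof (intro equalityI subsetI)
  fix w assume w: "w \<in> Rn n"
  obtain k where "(\<Sum>i<n. \<bar>w i\<bar>) \<le> real k" using real_arch_simple by blast
  moreover have "\<bar>w i\<bar> \<le> (\<Sum>i<n. \<bar>w i\<bar>)" if "i < n" for i
    using that by (intro member_le_sum) auto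
  ultimately have "\<bar>w i\<bar> \<le> real k" if "i < n" for i
    using that by (meson order_trans)
  with w have "w \<in> cube n k" by (simp add: mem_cube_iff)
  then show "w \<in> (\<Union>k. cube n k)" by blast
qed (auto simp: mem_cube_iff)

locale log_concave_measure =
  fixes n :: nat and M :: "(nat \<Rightarrow> real) measure"
  assumes log_concave: "log_concave n M"
begin

sublocale prob_space M
  using log_concave by (simp add: log_concave_def)

lemma sets_M: "sets M = sets borel"
  using log_concave by (simp add: log_concave_def)

lemma space_M: "space M = UNIV"
  using sets_eq_imp_space_eq[OF sets_M] by simp

lemma closed_sets_M: "closed A \<Longrightarrow> A \<in> sets M"
  using sets_M borel_closed by auto

lemma measure_Int_Rn:
  assumes A: "A \<in> sets M" shows "measure M (A \<inter> Rn n) = measure M A"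
proof -
  have Rn: "Rn n \<in> sets M" by (rule closed_sets_M[OF closed_Rn])
  have "measure M (Rn n) = 1" using log_concave by (simp add: log_concave_def)
  then have "AE w in M. w \<in> Rn n" by (rule AE_prob_1)
  then show ?thesis using A Rn by (intro measure_eq_AE) auto
qed

lemma measure_cube_Int_tendsto:
  assumes "closed A" shows "(\<lambda>k. measure M (cube n k \<inter> A)) \<longlonglongrightarrow> measure M A"
proof -
  have "(\<lambda>k. measure M (cube n k \<inter> A)) \<longlonglongrightarrow> measure M (\<Union>k. cube n k \<inter> A)"
    using assms incseq_cube
    by (intro finite_Lim_measure_incseq)
       (auto intro!: closed_sets_M compact_imp_closed compact_cube simp: incseq_def)
  also have "(\<Union>k. cube n k \<inter> A) = A \<inter> Rn n" using Union_cube by blast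
  finally show ?thesis using measure_Int_Rn closed_sets_M assms by simp
qed

lemma log_concave_closed:
  assumes A: "closed A" and B: "closed B" and l: "0 < l" "l < 1" and C: "C \<in> sets M"
    and comb: "\<And>a b. a \<in> A \<inter> Rn n \<Longrightarrow> b \<in> B \<inter> Rn n \<Longrightarrow> (\<lambda>i. l * a i + (1 - l) * b i) \<in> C"
  shows "measure M A powr l * measure M B powr (1 - l) \<le> measure M C"
proof (cases "measure M A = 0 \<or> measure M B = 0")
  case False
  have approx: "measure M (cube n k \<inter> A) powr l * measure M (cube n k \<inter> B) powr (1 - l) \<le> measure M C"
    for k
  proof -
    let ?A = "cube n k \<inter> A" and ?B = "cube n k \<inter> B"
    have "compact ?A" "compact ?B" "?A \<subseteq> Rn n" "?B \<subseteq> Rn n"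
      using compact_Int_closed[OF compact_cube] A B cube_subset_Rn[of n k] by auto
    then have "measure M ?A powr l * measure M ?B powr (1 - l)
        \<le> measure M {(\<lambda>i. l * a i + (1 - l) * b i) | a b. a \<in> ?A \<and> b \<in> ?B}"
      using log_concave l unfolding log_concave_def by blast
    also have "\<dots> \<le> measure M C"
      using comb cube_subset_Rn C by (intro finite_measure_mono) blast+
    finally show ?thesis .
  qed
  have "(\<lambda>k. measure M (cube n k \<inter> A) powr l * measure M (cube n k \<inter> B) powr (1 - l))
      \<longlonglongrightarrow> measure M A powr l * measure M B powr (1 - l)"
    using False by (intro tendsto_mult tendsto_powr measure_cube_Int_tendsto A B tendsto_const) auto
  then show ?thesis using approx by (intro LIMSEQ_le_const2) auto
qed auto

lemma log_concave_fun_tail_ip: "log_concave_fun (tail M (\<lambda>w. ip n w \<theta>))"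
  unfolding log_concave_fun_def
proof (intro allI impI)
  fix a b l :: real assume "0 < l" "l < 1"
  have closed: "closed {w. c \<le> ip n w \<theta>}" for c
    by (intro closed_Collect_le continuous_on_const continuous_on_ip)
  have "measure M {w. a \<le> ip n w \<theta>} powr l * measure M {w. b \<le> ip n w \<theta>} powr (1 - l)
      \<le> measure M {w. l * a + (1 - l) * b \<le> ip n w \<theta>}"
  proof (rule log_concave_closed[OF closed closed \<open>0 < l\<close> \<open>l < 1\<close> closed_sets_M[OF closed]])
    fix v w assume "v \<in> {w. a \<le> ip n w \<theta>} \<inter> Rn n" "w \<in> {w. b \<le> ip n w \<theta>} \<inter> Rn n"
    then have "l * a + (1 - l) * b \<le> l * ip n v \<theta> + (1 - l) * ip n w \<theta>"
      using \<open>0 < l\<close> \<open>l < 1\<close> by (intro add_mono mult_left_mono) auto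
    then show "(\<lambda>i. l * v i + (1 - l) * w i) \<in> {w. l * a + (1 - l) * b \<le> ip n w \<theta>}"
      by (simp add: ip_convex_comb)
  qed
  then show "tail M (\<lambda>w. ip n w \<theta>) a powr l * tail M (\<lambda>w. ip n w \<theta>) b powr (1 - l)
      \<le> tail M (\<lambda>w. ip n w \<theta>) (l * a + (1 - l) * b)"
    by (simp add: tail_def space_M)
qed

lemma not_AE_ip_eq_zero:
  assumes "\<theta> \<in> Rn n" "\<exists>i<n. \<theta> i \<noteq> 0"
  shows "\<not> (AE w in M. ip n w \<theta> = 0)"
proof
  let ?Z = "{w. ip n w \<theta> = 0}"
  have Z: "?Z \<in> sets M" by (intro closed_sets_M closed_Collect_eq continuous_on_ip continuous_on_const)
  assume "AE w in M. ip n w \<theta> = 0"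
  then have "measure M ?Z = 1" using Z by (simp add: prob_eq_1)
  then have "measure M {w \<in> Rn n. ip n \<theta> w = 0} = 1"
    using measure_Int_Rn[OF Z] by (simp add: ip_commute Int_def conj_commute)
  moreover have "measure M {w \<in> Rn n. ip n \<theta> w = 0} < 1"
    using log_concave assms unfolding log_concave_def by blast
  ultimately show False by simp
qed

end

lemma centered_integrable_ip:
  assumes "centered n M" shows "integrable M (\<lambda>w. ip n w \<theta>)"
  using assms unfolding ip_def centered_def
  by (intro Bochner_Integration.integrable_sum) auto

lemma centered_integral_ip:
  assumes "centered n M" shows "(\<integral>w. ip n w \<theta> \<partial>M) = 0"
  using assms unfolding ip_def centered_def
  by (subst Bochner_Integration.integral_sum) auto

lemma support_Zplus_powr_le:
  assumes "0 < t"
  shows "ennreal (support_Zplus n M t \<theta> powr t) \<le> (\<integral>\<^sup>+w. ennreal (max (ip n w \<theta>) 0 powr t) \<partial>M)"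
proof -
  let ?I = "\<integral>w. max (ip n w \<theta>) 0 powr t \<partial>M"
  have "support_Zplus n M t \<theta> powr t = ?I"
    using assms by (simp add: support_Zplus_def powr_powr integral_nonneg_AE)
  also have "ennreal ?I \<le> (\<integral>\<^sup>+w. ennreal (max (ip n w \<theta>) 0 powr t) \<partial>M)"
  proof (cases "integrable M (\<lambda>w. max (ip n w \<theta>) 0 powr t)")
    case True
    then show ?thesis by (simp add: nn_integral_eq_integral)
  qed (simp add: not_integrable_integral_eq)
  finally show ?thesis .
qed

lemma phi_greatest:
  assumes "1 \<le> n" "x \<in> Rn n" and H: "\<And>H. halfspace n H \<Longrightarrow> x \<in> H \<Longrightarrow> B \<le> measure M H"
  shows "B \<le> phi n M x"
proof -
  let ?e = "\<lambda>i::nat. if i = 0 then 1 else 0 :: real"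
  have "halfspace n {w \<in> Rn n. ip n ?e w \<le> ip n ?e x}"
    unfolding halfspace_def using assms(1) by (intro exI[of _ ?e] exI) (auto simp: Rn_def)
  then have "{measure M H | H. halfspace n H \<and> x \<in> H} \<noteq> {}"
    using assms(2) by blast
  then show ?thesis
    unfolding phi_def using H by (intro cInf_greatest) auto
qed

lemma (in log_concave_measure) halfspace_measure_ge:
  assumes centered: "centered n M" and t: "1 \<le> t" and \<delta>: "0 \<le> \<delta>" "\<delta> \<le> 1"
    and z: "z \<in> Zplus n M t" and H: "halfspace n H" and x: "(\<lambda>i. \<delta> * z i) \<in> H"
  shows "(1 - \<delta> powr t) / (10 * exp t) \<le> measure M H"
proof -
  obtain u c where u: "u \<in> Rn n" "\<exists>i<n. u i \<noteq> 0" and H_eq: "H = {w \<in> Rn n. ip n u w \<le> c}"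
    using H unfolding halfspace_def by blast
  define \<theta> where "\<theta> = (\<lambda>i. - u i)"
  define h where "h = support_Zplus n M t \<theta>"
  have \<theta>: "\<theta> \<in> Rn n" "\<exists>i<n. \<theta> i \<noteq> 0" using u by (auto simp: \<theta>_def Rn_def)
  interpret X: centered_log_concave_tail M "\<lambda>w. ip n w \<theta>"
    using centered_integrable_ip[OF centered] centered_integral_ip[OF centered]
      log_concave_fun_tail_ip not_AE_ip_eq_zero[OF \<theta>]
    by unfold_locales auto
  have "(1 - \<delta> powr t) / (10 * exp t) \<le> tail M (\<lambda>w. ip n w \<theta>) (\<delta> * h)"
    using t \<delta> support_Zplus_powr_le[of t n M \<theta>]
    by (intro X.tail_ge_of_pos_moment) (auto simp: h_def support_Zplus_def)
  also have "\<dots> = measure M ({w. \<delta> * h \<le> ip n w \<theta>} \<inter> Rn n)"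
    by (simp add: tail_def space_M measure_Int_Rn closed_sets_M closed_Collect_le continuous_on_ip)
  also have "\<dots> \<le> measure M H"
  proof (rule finite_measure_mono)
    have "ip n z \<theta> \<le> h" using z \<theta>(1) by (auto simp: Zplus_def h_def)
    then have "- (\<delta> * h) \<le> ip n u (\<lambda>i. \<delta> * z i)"
      using \<delta> mult_left_mono[of "ip n z \<theta>" h \<delta>] by (simp add: ip_scale \<theta>_def ip_uminus)
    moreover have "ip n u (\<lambda>i. \<delta> * z i) \<le> c" using x by (simp add: H_eq)
    ultimately show "{w. \<delta> * h \<le> ip n w \<theta>} \<inter> Rn n \<subseteq> H"
      by (auto simp: H_eq \<theta>_def ip_uminus)
    show "H \<in> sets M"
      unfolding H_eq using closed_Rn
      by (intro closed_sets_M) (auto simp: ip_commute[of n u] Collect_conj_eq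
          intro!: closed_Collect_le continuous_on_ip continuous_on_const)
  qed
  finally show ?thesis .
qed

theorem phi_ge_of_mem_scaled_Zplus:
  assumes "1 \<le> n" "log_concave n M" "centered n M" "1 \<le> t" "0 \<le> \<delta>" "\<delta> \<le> 1"
    and x: "x \<in> (\<lambda>z i. \<delta> * z i) ` Zplus n M t"
  shows "(1 - \<delta> powr t) / (10 * exp t) \<le> phi n M x"
proof -
  interpret log_concave_measure n M by unfold_locales fact
  obtain z where z: "z \<in> Zplus n M t" and x_eq: "x = (\<lambda>i. \<delta> * z i)" using x by blast
  have "x \<in> Rn n" using z by (simp add: x_eq Zplus_def Rn_def)
  then show ?thesis
    using assms z by (intro phi_greatest) (auto intro: halfspace_measure_ge simp: x_eq)
qed

lemma square_div_powr_le:
  fixes t \<delta> :: real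
  assumes t: "1 \<le> t" and \<delta>: "0 \<le> \<delta>" "\<delta> \<le> 1"
  shows "(1 - \<delta> powr t)\<^sup>2 / (10 * exp 1) powr t \<le> (1 - \<delta> powr t) / (10 * exp t)"
proof -
  have d: "0 \<le> 1 - \<delta> powr t" "1 - \<delta> powr t \<le> 1"
    using \<delta> t powr_mono2[of t \<delta> 1] by auto
  have "exp 1 powr t = exp t" by (simp add: powr_def)
  then have "(10 * exp 1) powr t = 10 powr t * exp t" by (simp add: powr_mult)
  moreover have "10 * exp t \<le> 10 powr t * exp t"
    using powr_mono[OF t, of 10] by simp
  ultimately have "10 * exp t \<le> (10 * exp 1) powr t" by simp
  then have "(1 - \<delta> powr t) / (10 * exp 1) powr t \<le> (1 - \<delta> powr t) / (10 * exp t)"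
    using d by (intro divide_left_mono) auto
  moreover have "(1 - \<delta> powr t)\<^sup>2 \<le> 1 - \<delta> powr t"
    using d by (simp add: power2_eq_square mult_left_le_one_le)
  ultimately show ?thesis
    using divide_right_mono[of "(1 - \<delta> powr t)\<^sup>2" "1 - \<delta> powr t" "(10 * exp 1) powr t"] by simp
qed

theorem lemma4p3:
  shows "\<exists>C1::real. C1 > 1 \<and>
    (\<forall>n M t \<delta> x. n \<ge> 1 \<and> log_concave n M \<and> centered n M \<and> t \<ge> 1 \<and> 0 < \<delta> \<and> \<delta> < 1 \<and>
       x \<in> (\<lambda>z i. \<delta> * z i) ` Zplus n M t \<longrightarrow>
       phi n M x \<ge> (1 - \<delta> powr t)\<^sup>2 / C1 powr t)"
proof (intro exI[of _ "10 * exp 1"] conjI allI impI)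
  show "10 * exp 1 > (1::real)" using exp_ge_add_one_self[of 1] by simp
  fix n M t \<delta> and x :: "nat \<Rightarrow> real"
  assume hyps: "1 \<le> n \<and> log_concave n M \<and> centered n M \<and> 1 \<le> t \<and> 0 < \<delta> \<and> \<delta> < 1 \<and>
    x \<in> (\<lambda>z i. \<delta> * z i) ` Zplus n M t"
  then have "(1 - \<delta> powr t) / (10 * exp t) \<le> phi n M x"
    by (intro phi_ge_of_mem_scaled_Zplus) auto
  moreover have "(1 - \<delta> powr t)\<^sup>2 / (10 * exp 1) powr t \<le> (1 - \<delta> powr t) / (10 * exp t)"
    using hyps by (intro square_div_powr_le) auto
  ultimately show "(1 - \<delta> powr t)\<^sup>2 / (10 * exp 1) powr t \<le> phi n M x" by linarith
qed

end
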